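(* Let $V$ be a valuation domain. (1) If $P$ is a branched prime ideal of $V$ and $Q$ is the prime ideal of $V$ directly below $P$ (i.e. $Q\subsetneq P$ with no prime ideal strictly between them), then the closure of $\mathcal P(P)$ in the constructible topology of $\mathcal I(V)$ is $\mathcal P(P)\cup\{Q\}$. (2) The set $\mathcal P_V$ of all primary ideals of $V$ is proconstructible in $\mathcal I(V)$.
   Context: A prime ideal $\mathfrak p$ is branched if there exists a $\mathfrak p$-primary ideal distinct from $\mathfrak p$ (for a branched prime of a valuation domain, the prime directly below it exists). $\mathcal P(P)$ denotes the set of $P$-primary ideals. $\mathcal I(V)$ is the set of ideals of $V$ with the Zariski topology having basis of open sets $\mathcal B(x_1,\ldots,x_n):=\{I\mid x_1,\ldots,x_n\in I\}$; it is spectral. The constructible topology is the coarsest topology in which all open quasi-compact subsets are clopen; proconstructible means closed in the constructible topology. *)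

theory Defs
  imports "HOL-Analysis.Analysis"
begin

text \<open>A valuation domain: an integral domain whose ideals (equivalently principal ideals)
  are totally ordered, i.e. for all a, b: a divides b or b divides a.\<close>
definition valuation_domain :: "'a::idom itself \<Rightarrow> bool" where
  "valuation_domain _ \<longleftrightarrow> (\<forall>a b :: 'a. a dvd b \<or> b dvd a)"

definition ring_ideal :: "'a::comm_ring_1 set \<Rightarrow> bool" where
  "ring_ideal I \<longleftrightarrow> 0 \<in> I \<and> (\<forall>x\<in>I. \<forall>y\<in>I. x + y \<in> I) \<and> (\<forall>r. \<forall>x\<in>I. r * x \<in> I)"

definition ideal_radical :: "'a::comm_ring_1 set \<Rightarrow> 'a set" where
  "ideal_radical I = {x. \<exists>n::nat. x ^ n \<in> I}"

definition prime_ideal :: "'a::comm_ring_1 set \<Rightarrow> bool" where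
  "prime_ideal P \<longleftrightarrow> ring_ideal P \<and> P \<noteq> UNIV \<and> (\<forall>a b. a * b \<in> P \<longrightarrow> a \<in> P \<or> b \<in> P)"

definition primary_ideal :: "'a::comm_ring_1 set \<Rightarrow> bool" where
  "primary_ideal I \<longleftrightarrow> ring_ideal I \<and> I \<noteq> UNIV \<and>
     (\<forall>a b. a * b \<in> I \<longrightarrow> a \<notin> I \<longrightarrow> (\<exists>n::nat. b ^ n \<in> I))"

definition primary_ideals_of :: "'a::comm_ring_1 set \<Rightarrow> 'a set set" where
  "primary_ideals_of P = {I. primary_ideal I \<and> ideal_radical I = P}"

definition branched_prime :: "'a::comm_ring_1 set \<Rightarrow> bool" where
  "branched_prime P \<longleftrightarrow> prime_ideal P \<and> (\<exists>I\<in>primary_ideals_of P. I \<noteq> P)"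

definition all_ideals :: "'a::comm_ring_1 set set" where
  "all_ideals = {I. ring_ideal I}"

definition ideal_zariski :: "'a::comm_ring_1 set topology" where
  "ideal_zariski = topology_generated_by {{I \<in> all_ideals. F \<subseteq> I} | F. finite F}"

text \<open>Constructible topology: coarsest topology (on the same space) in which all open
  quasi-compact subsets are clopen, i.e. generated by the open quasi-compact sets and
  their complements.\<close>
definition constructible_topology :: "'a topology \<Rightarrow> 'a topology" where
  "constructible_topology X = topology_generated_by
     ({U. openin X U \<and> compactin X U} \<union> {topspace X - U | U. openin X U \<and> compactin X U})"

end

theory Submission
  imports Defs
begin

text \<open>The basic sets \<open>B(x) = {I. x \<in> I}\<close> are compact open in the Zariski topology of
  \<open>\<I>(V)\<close>, hence clopen in the constructible topology. If \<open>J\<close> is not primary, pick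
  \<open>a b \<in> J\<close> with \<open>a \<notin> J\<close> and no power of \<open>b\<close> in \<open>J\<close>; comparability of divisors gives
  \<open>a\<^sup>2 \<in> J\<close>, and then every primary ideal containing \<open>a b\<close> contains \<open>a\<close>. So
  \<open>B(a b) - B(a)\<close> is a constructible neighbourhood of \<open>J\<close> without primary ideals, and the
  primary ideals form a closed set.

  The \<open>P\<close>-primary ideals lie in the closed set of primary ideals between \<open>Q\<close> and \<open>P\<close>; such
  an ideal other than \<open>Q\<close> has a prime radical strictly above \<open>Q\<close>, hence equal to \<open>P\<close>.
  Conversely, every constructible neighbourhood of the prime \<open>Q\<close> contains all ideals
  \<open>I \<supseteq> Q\<close> with \<open>y \<notin> I\<close>, for some \<open>y \<notin> Q\<close>, and for \<open>y \<in> P - Q\<close> the contraction of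
  \<open>y\<^sup>2 V\<^sub>P\<close> is a \<open>P\<close>-primary ideal not containing \<open>y\<close>.\<close>

section \<open>Ideals of a valuation domain\<close>

lemma ring_idealD:
  assumes "ring_ideal I"
  shows ring_ideal_zero: "0 \<in> I"
    and ring_ideal_mult_left: "x \<in> I \<Longrightarrow> r * x \<in> I"
    and ring_ideal_mult_right: "x \<in> I \<Longrightarrow> x * r \<in> I"
  using assms unfolding ring_ideal_def by (auto simp: mult.commute[of x])

lemma ring_ideal_dvd_mem: "ring_ideal I \<Longrightarrow> x \<in> I \<Longrightarrow> x dvd y \<Longrightarrow> y \<in> I"
  by (auto elim!: dvdE intro: ring_ideal_mult_right)

lemma ring_ideal_one_mem: "ring_ideal I \<Longrightarrow> 1 \<in> I \<Longrightarrow> I = UNIV"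
  using ring_ideal_dvd_mem[OF _ _ one_dvd] by blast

lemma ring_ideal_principal: "ring_ideal {y. x dvd y}"
  unfolding ring_ideal_def by auto

lemma prime_idealD:
  assumes "prime_ideal P"
  shows prime_ideal_ring_ideal: "ring_ideal P"
    and prime_ideal_one_not_mem: "1 \<notin> P"
    and prime_ideal_mult_mem: "a * b \<in> P \<Longrightarrow> a \<in> P \<or> b \<in> P"
  using assms ring_ideal_one_mem unfolding prime_ideal_def by auto

lemma prime_ideal_power_mem: "prime_ideal P \<Longrightarrow> x ^ n \<in> P \<Longrightarrow> x \<in> P"
  by (induction n) (auto dest: prime_ideal_mult_mem simp: prime_ideal_one_not_mem)

lemma prime_ideal_prod_not_mem:
  assumes "prime_ideal P" "finite A" "\<And>x. x \<in> A \<Longrightarrow> f x \<notin> P"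
  shows "prod f A \<notin> P"
  using assms(2,3)
  by (induction A rule: finite_induct)
    (use assms(1) in \<open>auto dest: prime_ideal_mult_mem simp: prime_ideal_one_not_mem\<close>)

lemma primary_ideal_ring_ideal: "primary_ideal I \<Longrightarrow> ring_ideal I"
  unfolding primary_ideal_def by blast

lemma prime_imp_primary_ideal: "prime_ideal P \<Longrightarrow> primary_ideal P"
  unfolding prime_ideal_def primary_ideal_def by (metis power_one_right)

lemma ideal_radical_subset: "I \<subseteq> ideal_radical I"
  unfolding ideal_radical_def by (auto intro: exI[of _ 1])

lemma ideal_radical_subset_prime: "prime_ideal P \<Longrightarrow> I \<subseteq> P \<Longrightarrow> ideal_radical I \<subseteq> P"
  unfolding ideal_radical_def by (auto dest: prime_ideal_power_mem)

lemma ideal_radical_prime: "prime_ideal P \<Longrightarrow> ideal_radical P = P"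
  using ideal_radical_subset ideal_radical_subset_prime by blast

lemma primary_ideals_of_subset: "I \<in> primary_ideals_of P \<Longrightarrow> I \<subseteq> P"
  unfolding primary_ideals_of_def using ideal_radical_subset by blast

lemma prime_in_primary_ideals_of: "prime_ideal P \<Longrightarrow> P \<in> primary_ideals_of P"
  unfolding primary_ideals_of_def by (simp add: prime_imp_primary_ideal ideal_radical_prime)

lemma valuation_domain_dvd_linear:
  "valuation_domain TYPE('a::idom) \<Longrightarrow> (a::'a) dvd b \<or> b dvd a"
  unfolding valuation_domain_def by blast

lemma valuation_domain_ideals_linear:
  assumes "valuation_domain TYPE('a::idom)" "ring_ideal (I::'a set)" "ring_ideal J"
  shows "I \<subseteq> J \<or> J \<subseteq> I"
  using valuation_domain_dvd_linear[OF assms(1)] ring_ideal_dvd_mem assms(2,3) by blast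

lemma valuation_domain_ring_ideal_radical:
  assumes vd: "valuation_domain TYPE('a::idom)" and J: "ring_ideal (J::'a set)"
  shows "ring_ideal (ideal_radical J)"
proof -
  have add_dvd: "x + y \<in> ideal_radical J" if x: "x \<in> ideal_radical J" and "x dvd y" for x y
  proof -
    obtain n c where n: "x ^ n \<in> J" and c: "y = x * c"
      using x \<open>x dvd y\<close> unfolding ideal_radical_def by blast
    have "(x + y) ^ n = x ^ n * (1 + c) ^ n"
      by (simp add: c distrib_left power_mult_distrib[symmetric])
    then show ?thesis
      using ring_ideal_mult_right[OF J n] unfolding ideal_radical_def by (metis mem_Collect_eq)
  qed
  show ?thesis
    unfolding ring_ideal_def
  proof (intro conjI ballI allI)
    show "0 \<in> ideal_radical J"
      using ring_ideal_zero[OF J] ideal_radical_subset by blast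
    show "x + y \<in> ideal_radical J" if "x \<in> ideal_radical J" "y \<in> ideal_radical J" for x y
      using that add_dvd valuation_domain_dvd_linear[OF vd, of x y] by (metis add.commute)
    show "r * x \<in> ideal_radical J" if "x \<in> ideal_radical J" for r x
      using that ring_ideal_mult_left[OF J] unfolding ideal_radical_def
      by (auto simp: power_mult_distrib)
  qed
qed

lemma valuation_domain_prime_ideal_radical:
  assumes vd: "valuation_domain TYPE('a::idom)" and J: "ring_ideal (J::'a set)" and "J \<noteq> UNIV"
  shows "prime_ideal (ideal_radical J)"
proof -
  have mult_dvd: "b \<in> ideal_radical J" if ab: "a * b \<in> ideal_radical J" and "a dvd b" for a b
  proof -
    obtain n c where n: "(a * b) ^ n \<in> J" and c: "b = a * c"
      using ab \<open>a dvd b\<close> unfolding ideal_radical_def by blast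
    have "b ^ (2 * n) = (a * b) ^ n * c ^ n"
      by (simp add: power_mult power2_eq_square c mult_ac power_mult_distrib[symmetric])
    then show ?thesis
      using ring_ideal_mult_right[OF J n] unfolding ideal_radical_def by (metis mem_Collect_eq)
  qed
  have "1 \<notin> ideal_radical J"
    using ring_ideal_one_mem[OF J] \<open>J \<noteq> UNIV\<close> unfolding ideal_radical_def by auto
  moreover have "a \<in> ideal_radical J \<or> b \<in> ideal_radical J" if "a * b \<in> ideal_radical J" for a b
    using that mult_dvd[of a b] mult_dvd[of b a] valuation_domain_dvd_linear[OF vd, of a b]
    by (auto simp: mult.commute)
  ultimately show ?thesis
    unfolding prime_ideal_def using valuation_domain_ring_ideal_radical[OF vd J] by blast
qed

lemma valuation_domain_prime_subset_primary:
  assumes vd: "valuation_domain TYPE('a::idom)" and Q: "prime_ideal (Q::'a set)" and "Q \<subset> P"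
    and I: "I \<in> primary_ideals_of P"
  shows "Q \<subseteq> I"
proof
  fix q assume q: "q \<in> Q"
  obtain p where p: "p \<in> P" "p \<notin> Q" using \<open>Q \<subset> P\<close> by blast
  then obtain n where n: "p ^ n \<in> I"
    using I unfolding primary_ideals_of_def ideal_radical_def by blast
  have "p ^ n \<notin> Q" using prime_ideal_power_mem[OF Q] p by blast
  then have "\<not> q dvd p ^ n" using ring_ideal_dvd_mem[OF prime_ideal_ring_ideal[OF Q] q] by blast
  then have "p ^ n dvd q" using valuation_domain_dvd_linear[OF vd] by blast
  then show "q \<in> I"
    using I n ring_ideal_dvd_mem unfolding primary_ideals_of_def primary_ideal_def by blast
qed

text \<open>The contraction to the ring of the ideal \<open>a V\<^sub>P\<close> of the localisation at \<open>P\<close>.\<close>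
definition prime_saturation :: "'a::comm_ring_1 set \<Rightarrow> 'a \<Rightarrow> 'a set" where
  "prime_saturation P a = {z. \<exists>s. s \<notin> P \<and> a dvd z * s}"

lemma ring_ideal_prime_saturation:
  assumes P: "prime_ideal P"
  shows "ring_ideal (prime_saturation P a)"
  unfolding ring_ideal_def
proof (intro conjI ballI allI)
  show "0 \<in> prime_saturation P a"
    unfolding prime_saturation_def using prime_ideal_one_not_mem[OF P] by auto
  show "x + y \<in> prime_saturation P a"
    if xy: "x \<in> prime_saturation P a" "y \<in> prime_saturation P a" for x y
  proof -
    obtain s t where s: "s \<notin> P" "a dvd x * s" and t: "t \<notin> P" "a dvd y * t"
      using xy unfolding prime_saturation_def by blast
    have "s * t \<notin> P" using prime_ideal_mult_mem[OF P] s(1) t(1) by blast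
    moreover have "(x + y) * (s * t) = (x * s) * t + (y * t) * s"
      by (simp add: algebra_simps)
    then have "a dvd (x + y) * (s * t)"
      using s(2) t(2) by (simp add: dvd_add dvd_mult2)
    ultimately show ?thesis unfolding prime_saturation_def by blast
  qed
  show "r * x \<in> prime_saturation P a" if "x \<in> prime_saturation P a" for r x
  proof -
    obtain s where "s \<notin> P" "a dvd x * s"
      using \<open>x \<in> prime_saturation P a\<close> unfolding prime_saturation_def by blast
    moreover from this(2) have "a dvd (r * x) * s" by (simp add: mult.assoc)
    ultimately show ?thesis unfolding prime_saturation_def by blast
  qed
qed

lemma prime_saturation_subset:
  assumes P: "prime_ideal P" and "a \<in> P"
  shows "prime_saturation P a \<subseteq> P"
proof
  fix z assume "z \<in> prime_saturation P a"
  then obtain s where "s \<notin> P" "a dvd z * s" unfolding prime_saturation_def by blast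
  then show "z \<in> P"
    using ring_ideal_dvd_mem[OF prime_ideal_ring_ideal[OF P] \<open>a \<in> P\<close>] prime_ideal_mult_mem[OF P]
    by blast
qed

lemma prime_saturation_mult_cancel:
  assumes "prime_ideal P" "z * b \<in> prime_saturation P a" "b \<notin> P"
  shows "z \<in> prime_saturation P a"
proof -
  obtain s where "s \<notin> P" "a dvd z * (b * s)"
    using assms(2) unfolding prime_saturation_def by (auto simp: mult.assoc)
  then show ?thesis
    unfolding prime_saturation_def using prime_ideal_mult_mem[OF assms(1), of b s] assms(3) by blast
qed

lemma prime_saturation_primary:
  assumes P: "prime_ideal P" and "a \<in> P" and rad: "ideal_radical {z. a dvd z} = P"
  shows "prime_saturation P a \<in> primary_ideals_of P"
proof -
  have "{z. a dvd z} \<subseteq> prime_saturation P a"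
    unfolding prime_saturation_def using prime_ideal_one_not_mem[OF P] by (auto intro: exI[of _ 1])
  then have "P \<subseteq> ideal_radical (prime_saturation P a)"
    using rad unfolding ideal_radical_def by blast
  then have rad_sat: "ideal_radical (prime_saturation P a) = P"
    using ideal_radical_subset_prime[OF P prime_saturation_subset[OF assms(1,2)]] by blast
  have "primary_ideal (prime_saturation P a)"
    unfolding primary_ideal_def
  proof (intro conjI allI impI)
    show "ring_ideal (prime_saturation P a)" by (rule ring_ideal_prime_saturation[OF P])
    show "prime_saturation P a \<noteq> UNIV"
      using prime_saturation_subset[OF assms(1,2)] prime_ideal_one_not_mem[OF P] by blast
    show "\<exists>n. b ^ n \<in> prime_saturation P a"
      if "z * b \<in> prime_saturation P a" "z \<notin> prime_saturation P a" for z b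
      using that prime_saturation_mult_cancel[OF P] rad_sat unfolding ideal_radical_def by blast
  qed
  with rad_sat show ?thesis unfolding primary_ideals_of_def by blast
qed

lemma valuation_domain_radical_principal_immediate:
  assumes vd: "valuation_domain TYPE('a::idom)" and P: "prime_ideal (P::'a set)"
    and Q: "prime_ideal Q" and "Q \<subset> P" and immediate: "\<not> (\<exists>R. prime_ideal R \<and> Q \<subset> R \<and> R \<subset> P)"
    and "a \<in> P" "a \<notin> Q"
  shows "ideal_radical {z. a dvd z} = P"
proof -
  let ?R = "ideal_radical {z. a dvd z}"
  have aP: "{z. a dvd z} \<subseteq> P"
    using ring_ideal_dvd_mem[OF prime_ideal_ring_ideal[OF P] \<open>a \<in> P\<close>] by blast
  then have "{z. a dvd z} \<noteq> UNIV"
    using prime_ideal_one_not_mem[OF P] by auto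
  then have R: "prime_ideal ?R"
    by (rule valuation_domain_prime_ideal_radical[OF vd ring_ideal_principal])
  have "a \<in> ?R" using ideal_radical_subset[of "{z. a dvd z}"] by auto
  then have "\<not> ?R \<subseteq> Q" using \<open>a \<notin> Q\<close> by blast
  then have "Q \<subset> ?R"
    using valuation_domain_ideals_linear[OF vd prime_ideal_ring_ideal[OF Q] prime_ideal_ring_ideal[OF R]]
    by blast
  then have "\<not> ?R \<subset> P" using immediate R by blast
  then show ?thesis using ideal_radical_subset_prime[OF P aP] by blast
qed

lemma valuation_domain_primary_avoiding:
  assumes vd: "valuation_domain TYPE('a::idom)" and P: "prime_ideal (P::'a set)"
    and Q: "prime_ideal Q" and "Q \<subset> P" and immediate: "\<not> (\<exists>R. prime_ideal R \<and> Q \<subset> R \<and> R \<subset> P)"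
    and "y \<notin> Q"
  shows "\<exists>I \<in> primary_ideals_of P. y \<notin> I"
proof (cases "y \<in> P")
  case False
  then show ?thesis using prime_in_primary_ideals_of[OF P] by blast
next
  case True
  have "y \<noteq> 0" using \<open>y \<notin> Q\<close> ring_ideal_zero[OF prime_ideal_ring_ideal[OF Q]] by blast
  have yy: "y * y \<in> P" "y * y \<notin> Q"
    using True \<open>y \<notin> Q\<close> ring_ideal_mult_left[OF prime_ideal_ring_ideal[OF P]] prime_ideal_mult_mem[OF Q]
    by blast+
  have "y \<notin> prime_saturation P (y * y)"
  proof
    assume "y \<in> prime_saturation P (y * y)"
    then obtain s where "s \<notin> P" "y * y dvd y * s" unfolding prime_saturation_def by blast
    then show False
      using \<open>y \<noteq> 0\<close> ring_ideal_dvd_mem[OF prime_ideal_ring_ideal[OF P] True] by auto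
  qed
  moreover have "prime_saturation P (y * y) \<in> primary_ideals_of P"
    using prime_saturation_primary[OF P yy(1)]
      valuation_domain_radical_principal_immediate[OF vd P Q \<open>Q \<subset> P\<close> immediate yy] by blast
  ultimately show ?thesis by blast
qed

lemma valuation_domain_square_mem:
  assumes vd: "valuation_domain TYPE('a::idom)" and J: "ring_ideal (J::'a set)"
    and ab: "a * b \<in> J" and no_power: "\<And>n. b ^ n \<notin> J"
  shows "a * a \<in> J"
proof (cases "a dvd b")
  case True
  then obtain c where "b = a * c" by blast
  then have "b ^ 2 = (a * b) * c" by (simp add: power2_eq_square mult_ac)
  then show ?thesis using ring_ideal_mult_right[OF J ab] no_power by metis
next
  case False
  then obtain c where c: "a = b * c" using valuation_domain_dvd_linear[OF vd] by blast
  have "a * a = (a * b) * c" using c by (simp add: mult_ac)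
  then show ?thesis using ring_ideal_mult_right[OF J ab, of c] by (simp only:)
qed

lemma valuation_domain_not_primary_witness:
  assumes vd: "valuation_domain TYPE('a::idom)" and J: "ring_ideal (J::'a set)"
    and "J \<noteq> UNIV" and "\<not> primary_ideal J"
  obtains a b where "a * b \<in> J" "a \<notin> J" "\<And>I. primary_ideal I \<Longrightarrow> a * b \<in> I \<Longrightarrow> a \<in> I"
proof -
  obtain a b where ab: "a * b \<in> J" and "a \<notin> J" and no_power: "\<And>n. b ^ n \<notin> J"
    using assms(2-4) unfolding primary_ideal_def by blast
  have aa: "a * a \<in> J" by (rule valuation_domain_square_mem[OF vd J ab no_power])
  have "a \<in> I" if I: "primary_ideal I" and "a * b \<in> I" for I
  proof (rule ccontr)
    assume "a \<notin> I"
    then obtain n where n: "b ^ n \<in> I" using I \<open>a * b \<in> I\<close> unfolding primary_ideal_def by blast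
    then have "\<not> b ^ n dvd a"
      using \<open>a \<notin> I\<close> ring_ideal_dvd_mem[OF primary_ideal_ring_ideal[OF I]] by blast
    then obtain c where c: "b ^ n = a * c" using valuation_domain_dvd_linear[OF vd] by blast
    have "b ^ (2 * n) = b ^ n * b ^ n" by (simp add: mult_2 power_add)
    also have "\<dots> = (a * a) * (c * c)" by (simp add: c mult_ac)
    finally have "b ^ (2 * n) = (a * a) * (c * c)" .
    then show False using ring_ideal_mult_right[OF J aa] no_power by metis
  qed
  then show ?thesis using that ab \<open>a \<notin> J\<close> by blast
qed

lemma valuation_domain_primary_between_immediate:
  assumes vd: "valuation_domain TYPE('a::idom)" and P: "prime_ideal (P::'a set)"
    and immediate: "\<not> (\<exists>R. prime_ideal R \<and> Q \<subset> R \<and> R \<subset> P)"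
    and I: "primary_ideal I" and "Q \<subseteq> I" "I \<subseteq> P"
  shows "I = Q \<or> I \<in> primary_ideals_of P"
proof (cases "I = Q")
  case False
  have R: "prime_ideal (ideal_radical I)"
    using valuation_domain_prime_ideal_radical[OF vd primary_ideal_ring_ideal[OF I]] I
    unfolding primary_ideal_def by blast
  have "Q \<subset> ideal_radical I" using False \<open>Q \<subseteq> I\<close> ideal_radical_subset[of I] by blast
  then have "\<not> ideal_radical I \<subset> P" using immediate R by blast
  then have "ideal_radical I = P" using ideal_radical_subset_prime[OF P \<open>I \<subseteq> P\<close>] by blast
  then show ?thesis using I unfolding primary_ideals_of_def by blast
qed simp

section \<open>The Zariski and constructible topologies on ideals\<close>

lemma topspace_constructible_topology:
  assumes "compact_space X"
  shows "topspace (constructible_topology X) = topspace X"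
  using assms openin_subset unfolding constructible_topology_def compact_space_def
  by (fastforce simp: topology_generated_by_topspace)

lemma openin_constructible_topology:
  "openin X U \<Longrightarrow> compactin X U \<Longrightarrow> openin (constructible_topology X) U"
  unfolding constructible_topology_def by (rule topology_generated_by_Basis) blast

lemma closedin_constructible_topology:
  assumes "compact_space X" "openin X U" "compactin X U"
  shows "closedin (constructible_topology X) U"
proof -
  have "openin (constructible_topology X) (topspace X - U)"
    unfolding constructible_topology_def using assms(2,3) by (intro topology_generated_by_Basis) blast
  then show ?thesis
    unfolding closedin_def topspace_constructible_topology[OF assms(1)] using openin_subset[OF assms(2)]
    by blast
qed

lemma openin_ideal_zariski_iff:
  "openin ideal_zariski U \<longleftrightarrow> generate_topology_on {{I \<in> all_ideals. F \<subseteq> I} | F. finite F} U"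
  unfolding ideal_zariski_def by (rule openin_topology_generated_by_iff)

lemma topspace_ideal_zariski: "topspace ideal_zariski = all_ideals"
  unfolding ideal_zariski_def topology_generated_by_topspace by blast

lemma openin_ideal_zariski_principal: "openin ideal_zariski {I \<in> all_ideals. x \<in> I}"
  unfolding ideal_zariski_def by (rule topology_generated_by_Basis) (auto intro: exI[of _ "{x}"])

lemma openin_ideal_zariski_upclosed:
  assumes "openin ideal_zariski U" "I \<in> U" "J \<in> all_ideals" "I \<subseteq> J"
  shows "J \<in> U"
  using assms(1)[unfolded openin_ideal_zariski_iff] assms(2-4)
  by (induction arbitrary: I) blast+

lemma compactin_ideal_zariski_principal: "compactin ideal_zariski {I \<in> all_ideals. x \<in> I}"
  unfolding compactin_def topspace_ideal_zariski
proof (intro conjI allI impI)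
  fix \<U> assume \<U>: "(\<forall>U\<in>\<U>. openin ideal_zariski U) \<and> {I \<in> all_ideals. x \<in> I} \<subseteq> \<Union>\<U>"
  have principal: "{y. x dvd y} \<in> {I \<in> all_ideals. x \<in> I}"
    using ring_ideal_principal[of x] unfolding all_ideals_def by auto
  then obtain U where U: "U \<in> \<U>" "{y. x dvd y} \<in> U" using \<U> by blast
  have "{I \<in> all_ideals. x \<in> I} \<subseteq> U"
    using openin_ideal_zariski_upclosed[of U "{y. x dvd y}"] U \<U> ring_ideal_dvd_mem
    unfolding all_ideals_def by blast
  then show "\<exists>\<F>. finite \<F> \<and> \<F> \<subseteq> \<U> \<and> {I \<in> all_ideals. x \<in> I} \<subseteq> \<Union>\<F>"
    using U by (intro exI[of _ "{U}"]) auto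
qed auto

lemma compact_space_ideal_zariski: "compact_space (ideal_zariski :: 'a::comm_ring_1 set topology)"
proof -
  have "{I \<in> all_ideals. (0::'a) \<in> I} = all_ideals"
    using ring_ideal_zero unfolding all_ideals_def by blast
  then show ?thesis
    using compactin_ideal_zariski_principal[of "0::'a"]
    unfolding compact_space_def topspace_ideal_zariski by simp
qed

lemma compactin_ideal_zariski_avoiding_prime:
  fixes Q :: "'a::comm_ring_1 set"
  assumes W: "openin ideal_zariski W" "compactin ideal_zariski W"
    and Q: "prime_ideal Q" and "Q \<notin> W"
  obtains y where "y \<notin> Q" "\<And>I. I \<in> W \<Longrightarrow> y \<in> I"
proof -
  let ?B = "\<lambda>x. {I \<in> all_ideals. x \<in> I}"
  have "W \<subseteq> \<Union>(?B ` (- Q))"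
  proof
    fix I assume "I \<in> W"
    then have I: "I \<in> all_ideals" using openin_subset[OF W(1)] topspace_ideal_zariski by blast
    have "Q \<in> all_ideals" using Q unfolding prime_ideal_def all_ideals_def by blast
    then have "\<not> I \<subseteq> Q" using openin_ideal_zariski_upclosed[OF W(1) \<open>I \<in> W\<close>] \<open>Q \<notin> W\<close> by blast
    then show "I \<in> \<Union>(?B ` (- Q))" using I by blast
  qed
  moreover have "\<forall>U \<in> ?B ` (- Q). openin ideal_zariski U"
    using openin_ideal_zariski_principal by blast
  ultimately obtain \<F> where \<F>: "finite \<F>" "\<F> \<subseteq> ?B ` (- Q)" "W \<subseteq> \<Union>\<F>"
    using W(2) unfolding compactin_def by (elim conjE allE[of _ "?B ` (- Q)"]) blast
  obtain A where A: "finite A" "A \<subseteq> - Q" "W \<subseteq> \<Union>(?B ` A)"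
    using finite_subset_image[OF \<F>(1,2)] \<F>(3) by blast
  have "\<Prod>A \<notin> Q" using prime_ideal_prod_not_mem[OF Q A(1), of "\<lambda>x. x"] A(2) by blast
  moreover have "\<Prod>A \<in> I" if "I \<in> W" for I
  proof -
    obtain x where "x \<in> A" "x \<in> I" "I \<in> all_ideals" using A(3) \<open>I \<in> W\<close> by blast
    then show ?thesis
      using ring_ideal_dvd_mem dvd_prodI[OF A(1), of x "\<lambda>x. x"] unfolding all_ideals_def by fastforce
  qed
  ultimately show ?thesis using that by blast
qed

lemma constructible_nhood_prime:
  fixes Q :: "'a::comm_ring_1 set"
  assumes Q: "prime_ideal Q"
    and T: "openin (constructible_topology ideal_zariski) T" and "Q \<in> T"
  obtains y where "y \<notin> Q" "{I \<in> all_ideals. Q \<subseteq> I \<and> y \<notin> I} \<subseteq> T"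
proof -
  have "\<exists>y. y \<notin> Q \<and> {I \<in> all_ideals. Q \<subseteq> I \<and> y \<notin> I} \<subseteq> T"
    using T[unfolded constructible_topology_def openin_topology_generated_by_iff] \<open>Q \<in> T\<close>
  proof induction
    case Empty
    then show ?case by simp
  next
    case (Int a b)
    obtain y where y: "y \<notin> Q" "{I \<in> all_ideals. Q \<subseteq> I \<and> y \<notin> I} \<subseteq> a"
      using Int.IH(1) Int.prems by blast
    obtain z where z: "z \<notin> Q" "{I \<in> all_ideals. Q \<subseteq> I \<and> z \<notin> I} \<subseteq> b"
      using Int.IH(2) Int.prems by blast
    have "y * z \<notin> Q" using prime_ideal_mult_mem[OF Q] y(1) z(1) by blast
    moreover have "y \<notin> I \<and> z \<notin> I" if "I \<in> all_ideals" "y * z \<notin> I" for I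
      using that ring_ideal_mult_left[of I z y] ring_ideal_mult_right[of I y z]
      unfolding all_ideals_def by blast
    then have "{I \<in> all_ideals. Q \<subseteq> I \<and> y * z \<notin> I} \<subseteq> a \<inter> b"
      using y(2) z(2) by blast
    ultimately show ?case by blast
  next
    case (UN K)
    then obtain k where "k \<in> K" "Q \<in> k" by blast
    then obtain y where "y \<notin> Q" "{I \<in> all_ideals. Q \<subseteq> I \<and> y \<notin> I} \<subseteq> k"
      using UN.IH by blast
    then show ?case using \<open>k \<in> K\<close> by blast
  next
    case (Basis s)
    then consider "openin ideal_zariski s"
      | W where "openin ideal_zariski W" "compactin ideal_zariski W" "s = all_ideals - W"
      unfolding topspace_ideal_zariski by blast
    then show ?case
    proof cases
      case 1
      have "{I \<in> all_ideals. Q \<subseteq> I} \<subseteq> s"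
        using openin_ideal_zariski_upclosed[OF 1 Basis.prems] by blast
      then show ?thesis using prime_ideal_one_not_mem[OF Q] by blast
    next
      case (2 W)
      then obtain y where "y \<notin> Q" "\<And>I. I \<in> W \<Longrightarrow> y \<in> I"
        using compactin_ideal_zariski_avoiding_prime[of W Q] Q Basis.prems by blast
      then show ?thesis using 2(3) by blast
    qed
  qed
  then show ?thesis using that by blast
qed

lemma topspace_constructible_ideal_zariski:
  "topspace (constructible_topology ideal_zariski) = all_ideals"
  by (simp add: topspace_constructible_topology[OF compact_space_ideal_zariski] topspace_ideal_zariski)

lemma clopen_constructible_ideal_zariski_principal:
  "openin (constructible_topology ideal_zariski) {I \<in> all_ideals. x \<in> I}"
  "closedin (constructible_topology ideal_zariski) {I \<in> all_ideals. x \<in> I}"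
  using openin_constructible_topology closedin_constructible_topology[OF compact_space_ideal_zariski]
    openin_ideal_zariski_principal compactin_ideal_zariski_principal by blast+

lemma closedin_constructible_ideal_interval:
  "closedin (constructible_topology ideal_zariski) {I \<in> all_ideals. A \<subseteq> I \<and> I \<subseteq> B}"
proof -
  let ?C = "constructible_topology ideal_zariski"
  let ?B = "\<lambda>x. {I \<in> all_ideals. x \<in> I}"
  let ?K = "{all_ideals} \<union> ?B ` A \<union> (\<lambda>x. all_ideals - ?B x) ` (- B)"
  have "closedin ?C all_ideals"
    using closedin_topspace[of ?C] unfolding topspace_constructible_ideal_zariski .
  moreover have "closedin ?C (all_ideals - ?B x)" for x
    using closedin_diff[OF \<open>closedin ?C all_ideals\<close> clopen_constructible_ideal_zariski_principal(1)] .
  ultimately have "closedin ?C (\<Inter>?K)"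
    using clopen_constructible_ideal_zariski_principal(2) by (intro closedin_Inter) auto
  moreover have "{I \<in> all_ideals. A \<subseteq> I \<and> I \<subseteq> B} = \<Inter>?K"
    by auto
  ultimately show ?thesis by simp
qed

lemma closedin_constructible_primary_ideals:
  assumes vd: "valuation_domain TYPE('a::idom)"
  shows "closedin (constructible_topology ideal_zariski) {I :: 'a set. primary_ideal I}"
proof -
  let ?C = "constructible_topology (ideal_zariski :: 'a set topology)"
  let ?B = "\<lambda>x. {I \<in> all_ideals. x \<in> I}"
  let ?N = "all_ideals - {I. primary_ideal I}"
  have "\<exists>T. openin ?C T \<and> J \<in> T \<and> T \<subseteq> ?N" if J: "J \<in> ?N" for J
  proof (cases "J = UNIV")
    case True
    have "?B 1 \<subseteq> ?N"
      using ring_ideal_one_mem unfolding primary_ideal_def all_ideals_def by blast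
    then show ?thesis using J True clopen_constructible_ideal_zariski_principal(1) by blast
  next
    case False
    obtain a b where "a * b \<in> J" "a \<notin> J" and ab: "\<And>I. primary_ideal I \<Longrightarrow> a * b \<in> I \<Longrightarrow> a \<in> I"
      using valuation_domain_not_primary_witness[OF vd _ False] J unfolding all_ideals_def by blast
    have "openin ?C (all_ideals - ?B a)"
      using openin_diff[OF openin_topspace clopen_constructible_ideal_zariski_principal(2)]
      unfolding topspace_constructible_ideal_zariski .
    then have "openin ?C (?B (a * b) \<inter> (all_ideals - ?B a))"
      using clopen_constructible_ideal_zariski_principal(1) by blast
    moreover have "?B (a * b) \<inter> (all_ideals - ?B a) \<subseteq> ?N" using ab by blast
    ultimately show ?thesis using J \<open>a * b \<in> J\<close> \<open>a \<notin> J\<close> by blast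
  qed
  then have "openin ?C ?N" by (subst openin_subopen) blast
  then show ?thesis
    unfolding closedin_def topspace_constructible_ideal_zariski
    using primary_ideal_ring_ideal unfolding all_ideals_def by blast
qed

lemma constructible_closure_primary_ideals_of:
  assumes vd: "valuation_domain TYPE('a::idom)" and P: "prime_ideal (P::'a set)"
    and Q: "prime_ideal Q" and "Q \<subset> P" and immediate: "\<not> (\<exists>R. prime_ideal R \<and> Q \<subset> R \<and> R \<subset> P)"
  shows "constructible_topology ideal_zariski closure_of primary_ideals_of P = primary_ideals_of P \<union> {Q}"
proof
  let ?C = "constructible_topology (ideal_zariski :: 'a set topology)"
  let ?S = "{I \<in> all_ideals. Q \<subseteq> I \<and> I \<subseteq> P} \<inter> {I. primary_ideal I}"
  have primary_sub: "primary_ideals_of P \<subseteq> ?S"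
  proof
    fix I assume I: "I \<in> primary_ideals_of P"
    then have "primary_ideal I" unfolding primary_ideals_of_def by blast
    then show "I \<in> ?S"
      using valuation_domain_prime_subset_primary[OF vd Q \<open>Q \<subset> P\<close> I] primary_ideals_of_subset[OF I]
        primary_ideal_ring_ideal unfolding all_ideals_def by blast
  qed
  have "?C closure_of primary_ideals_of P \<subseteq> ?S"
    using closedin_constructible_ideal_interval closedin_constructible_primary_ideals[OF vd]
    by (intro closure_of_minimal[OF primary_sub] closedin_Int)
  also have "?S \<subseteq> primary_ideals_of P \<union> {Q}"
    using valuation_domain_primary_between_immediate[OF vd P immediate] by blast
  finally show "?C closure_of primary_ideals_of P \<subseteq> primary_ideals_of P \<union> {Q}" .
  have "Q \<in> ?C closure_of primary_ideals_of P"
    unfolding in_closure_of topspace_constructible_ideal_zariski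
  proof (intro conjI allI impI)
    show "Q \<in> all_ideals" using Q prime_ideal_ring_ideal unfolding all_ideals_def by blast
    fix T assume "Q \<in> T \<and> openin ?C T"
    then obtain y where "y \<notin> Q" and T: "{I \<in> all_ideals. Q \<subseteq> I \<and> y \<notin> I} \<subseteq> T"
      using constructible_nhood_prime[OF Q] by blast
    then obtain I where "I \<in> primary_ideals_of P" "y \<notin> I"
      using valuation_domain_primary_avoiding[OF vd P Q \<open>Q \<subset> P\<close> immediate] by blast
    then show "\<exists>I. I \<in> primary_ideals_of P \<and> I \<in> T" using primary_sub T by blast
  qed
  moreover have "primary_ideals_of P \<subseteq> ?C closure_of primary_ideals_of P"
    using primary_sub by (intro closure_of_subset) (auto simp: topspace_constructible_ideal_zariski)
  ultimately show "primary_ideals_of P \<union> {Q} \<subseteq> ?C closure_of primary_ideals_of P" by blast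
qed

theorem proposition5p6:
  assumes "valuation_domain TYPE('a::idom)"
  shows "(\<forall>P Q :: 'a set. branched_prime P \<longrightarrow> prime_ideal Q \<longrightarrow> Q \<subset> P \<longrightarrow>
            \<not> (\<exists>R. prime_ideal R \<and> Q \<subset> R \<and> R \<subset> P) \<longrightarrow>
            constructible_topology ideal_zariski closure_of primary_ideals_of P
              = primary_ideals_of P \<union> {Q})
       \<and> closedin (constructible_topology ideal_zariski) {I :: 'a set. primary_ideal I}"
  \<comment> \<open>a prime with an immediate predecessor is automatically branched; only primality of P is used\<close>
  using constructible_closure_primary_ideals_of[OF assms] closedin_constructible_primary_ideals[OF assms]
  unfolding branched_prime_def by blast

end
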